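(* Fix $k$ and let $C(m)=\binom{2m}{m+k}$ and $C_L(m)=\frac{1}{4^m}\binom{2m}{m+k}$, regarded as functions of $m$. For $j\ge1$ let $$\Delta_j(m)=(-1)^j\big[2^j\psi^{(j-1)}(2m+1)-\psi^{(j-1)}(m+1+k)-\psi^{(j-1)}(m+1-k)\big],$$ and define $x_0(m)=1$, $x_1(m)=0$, and $x_j(m)=\sum_{l=0}^{j-2}\binom{j-1}{l}\Delta_{j-l}(m)x_l(m)$ for $j\ge2$. Then for every $p\in\mathbb{N}_0$ and every $m$ at which these quantities are defined, $$C^{(p)}(m)=(-1)^p\binom{2m}{m+k}\sum_{i=0}^{p}\binom{p}{i}\Delta_1(m)^{p-i}x_i(m)$$ and $$C_L^{(p)}(m)=(-1)^p\binom{2m}{m+k}\sum_{i=0}^{p}\binom{p}{i}\big(\Delta_1(m)+\log 4\big)^{p-i}x_i(m).$$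
   Context: The binomial coefficient is defined via the gamma function: $\binom{2m}{m+k}=\frac{\Gamma(2m+1)}{\Gamma(m+k+1)\Gamma(m-k+1)}$. $\psi^{(n)}(z)=\frac{d^{n+1}}{dz^{n+1}}\log\Gamma(z)$ is the polygamma function. The identities are asserted at values of $m$ where none of $2m+1$, $m+1+k$, $m+1-k$ is a non-positive integer, so that all gamma and polygamma values involved are finite. *)

theory Defs
  imports "HOL-Analysis.Analysis"
begin

definition gbinom :: "real \<Rightarrow> real \<Rightarrow> real" where
  "gbinom k m = Gamma (2*m+1) / (Gamma (m+k+1) * Gamma (m-k+1))"

definition Delta :: "real \<Rightarrow> nat \<Rightarrow> real \<Rightarrow> real" where
  "Delta k j m = (-1)^j * (2^j * Polygamma (j-1) (2*m+1)
                   - Polygamma (j-1) (m+1+k) - Polygamma (j-1) (m+1-k))"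

fun xseq :: "real \<Rightarrow> nat \<Rightarrow> real \<Rightarrow> real" where
  "xseq k j m = (if j = 0 then 1 else if j = 1 then 0 else
      (\<Sum>l=0..j-2. real ((j-1) choose l) * Delta k (j-l) m * xseq k l m))"

end

theory Submission
  imports Defs "HOL-Complex_Analysis.Cauchy_Integral_Formula"
begin

text \<open>Write \<open>gbinom k = exp g\<close>: the derivatives \<open>g\<^sup>(\<^sup>j\<^sup>)\<close> are the polygamma combinations
  \<open>(-1)^j Delta k j\<close>, and Faa di Bruno's formula gives the \<open>p\<close>-th derivative of \<open>exp g\<close> as \<open>exp g\<close>
  times the complete Bell polynomial \<open>Y\<^sub>p(g', g'', \<dots>)\<close>. Separating the first argument of
  \<open>Y\<^sub>p\<close> via the Leibniz rule yields the binomial sum in \<open>g'\<close>, whose remaining Bell values are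
  \<open>(-1)^i xseq k i\<close>. A factor \<open>exp (\<gamma> t)\<close> merely shifts \<open>g'\<close> by \<open>\<gamma>\<close>; \<open>\<gamma> = - ln 4\<close> gives the
  second identity.\<close>

declare xseq.simps [simp del] \<comment> \<open>it unfolds \<open>xseq k i m\<close> for symbolic \<open>i\<close> and makes the simplifier loop\<close>

lemma field_differentiable_transform_within_open:
  assumes "g field_differentiable at t" "open S" "t \<in> S" "\<And>x. x \<in> S \<Longrightarrow> g x = f x"
  shows "f field_differentiable at t"
  using assms has_field_derivative_transform_within_open unfolding field_differentiable_def
  by metis

lemma higher_deriv_mult:
  fixes f g :: "'a::real_normed_field \<Rightarrow> 'a"
  assumes S: "open S" and z: "z \<in> S"
    and df: "\<And>i t. i < n \<Longrightarrow> t \<in> S \<Longrightarrow> (deriv ^^ i) f field_differentiable at t"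
    and dg: "\<And>i t. i < n \<Longrightarrow> t \<in> S \<Longrightarrow> (deriv ^^ i) g field_differentiable at t"
  shows "(deriv ^^ n) (\<lambda>w. f w * g w) z =
           (\<Sum>i = 0..n. of_nat (n choose i) * (deriv ^^ i) f z * (deriv ^^ (n-i)) g z)"
  using z df dg
proof (induction n arbitrary: z)
  case 0
  then show ?case by simp
next
  case (Suc n z)
  have Df: "((deriv ^^ i) f has_field_derivative deriv ((deriv ^^ i) f) w) (at w)"
    and Dg: "((deriv ^^ i) g has_field_derivative deriv ((deriv ^^ i) g) w) (at w)"
    if "i \<le> n" "w \<in> S" for i w
    using Suc.prems(2,3) that DERIV_deriv_iff_field_differentiable by (metis less_Suc_eq_le)+
  have IH: "(deriv ^^ n) (\<lambda>w. f w * g w) w =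
            (\<Sum>i = 0..n. of_nat (n choose i) * (deriv ^^ i) f w * (deriv ^^ (n-i)) g w)"
    if "w \<in> S" for w
    using Suc that by auto
  have "((\<lambda>w. \<Sum>i = 0..n. of_nat (n choose i) * (deriv ^^ i) f w * (deriv ^^ (n-i)) g w)
         has_field_derivative
         (\<Sum>i = 0..n. of_nat (n choose i) * (deriv ((deriv ^^ i) f) z * (deriv ^^ (n-i)) g z
                                            + deriv ((deriv ^^ (n-i)) g) z * (deriv ^^ i) f z))) (at z)"
  proof (rule DERIV_sum)
    fix i assume "i \<in> {0..n}"
    then have "((\<lambda>w. (deriv ^^ i) f w * (deriv ^^ (n-i)) g w) has_field_derivative
       deriv ((deriv ^^ i) f) z * (deriv ^^ (n-i)) g z + deriv ((deriv ^^ (n-i)) g) z * (deriv ^^ i) f z) (at z)"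
      using Df[of i z] Dg[of "n-i" z] Suc.prems(1) by (intro DERIV_mult) auto
    from DERIV_cmult[OF this, of "of_nat (n choose i)"]
    show "((\<lambda>w. of_nat (n choose i) * (deriv ^^ i) f w * (deriv ^^ (n-i)) g w) has_field_derivative
      of_nat (n choose i) * (deriv ((deriv ^^ i) f) z * (deriv ^^ (n-i)) g z
                             + deriv ((deriv ^^ (n-i)) g) z * (deriv ^^ i) f z)) (at z)"
      by (simp add: mult.assoc)
  qed
  moreover have "(\<Sum>i = 0..n. of_nat (n choose i) * (deriv ((deriv ^^ i) f) z * (deriv ^^ (n-i)) g z
                                  + deriv ((deriv ^^ (n-i)) g) z * (deriv ^^ i) f z))
      = (\<Sum>i = 0..Suc n. of_nat (Suc n choose i) * (deriv ^^ i) f z * (deriv ^^ (Suc n - i)) g z)"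
    apply (simp add: Suc_choose algebra_simps sum.distrib)
    apply (subst (4) sum_Suc_reindex)
    apply (auto simp: algebra_simps Suc_diff_le intro: sum.cong)
    done
  ultimately have "((\<lambda>w. \<Sum>i = 0..n. of_nat (n choose i) * (deriv ^^ i) f w * (deriv ^^ (n-i)) g w)
      has_field_derivative
      (\<Sum>i = 0..Suc n. of_nat (Suc n choose i) * (deriv ^^ i) f z * (deriv ^^ (Suc n - i)) g z)) (at z)"
    by simp
  then have "((deriv ^^ n) (\<lambda>w. f w * g w) has_field_derivative
      (\<Sum>i = 0..Suc n. of_nat (Suc n choose i) * (deriv ^^ i) f z * (deriv ^^ (Suc n - i)) g z)) (at z)"
    by (rule has_field_derivative_transform_within_open[OF _ S Suc.prems(1)]) (simp add: IH)
  then show ?case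
    by (simp add: DERIV_imp_deriv)
qed

lemma higher_deriv_eq_derivative_sequence:
  fixes d :: "nat \<Rightarrow> 'a::real_normed_field \<Rightarrow> 'a"
  assumes S: "open S" and t: "t \<in> S"
    and dd: "\<And>i t. t \<in> S \<Longrightarrow> (d i has_field_derivative d (Suc i) t) (at t)"
  shows "(deriv ^^ n) (d 0) t = d n t"
  using t
proof (induction n arbitrary: t)
  case 0
  then show ?case by simp
next
  case (Suc n)
  have "eventually (\<lambda>x. (deriv ^^ n) (d 0) x = d n x) (nhds t)"
    using eventually_nhds_in_open[OF S Suc.prems] by eventually_elim (rule Suc.IH)
  then have "(deriv ^^ Suc n) (d 0) t = deriv (d n) t"
    by (simp add: deriv_cong_ev)
  also have "\<dots> = d (Suc n) t"
    using dd[OF Suc.prems] by (rule DERIV_imp_deriv)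
  finally show ?case .
qed

fun complete_bell :: "(nat \<Rightarrow> 'a::comm_semiring_1) \<Rightarrow> nat \<Rightarrow> 'a" where
  "complete_bell a 0 = 1"
| "complete_bell a (Suc n) = (\<Sum>l=0..n. of_nat (n choose l) * a (Suc n - l) * complete_bell a l)"

lemma complete_bell_scale:
  "complete_bell (\<lambda>j. x ^ j * a j) n = x ^ n * complete_bell a n"
proof (induction n rule: less_induct)
  case (less n)
  show ?case
  proof (cases n)
    case (Suc m)
    have "complete_bell (\<lambda>j. x ^ j * a j) n
        = (\<Sum>l=0..m. x ^ n * (of_nat (m choose l) * a (Suc m - l) * complete_bell a l))"
      unfolding Suc complete_bell.simps
    proof (intro sum.cong refl)
      fix l assume l: "l \<in> {0..m}"
      have "of_nat (m choose l) * (x ^ (Suc m - l) * a (Suc m - l)) * complete_bell (\<lambda>j. x ^ j * a j) l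
          = (x ^ (Suc m - l) * x ^ l) * (of_nat (m choose l) * a (Suc m - l) * complete_bell a l)"
        using less[of l] l Suc by (simp add: mult_ac)
      also have "\<dots> = x ^ Suc m * (of_nat (m choose l) * a (Suc m - l) * complete_bell a l)"
        using l by (simp flip: power_add)
      finally show "of_nat (m choose l) * (x ^ (Suc m - l) * a (Suc m - l)) * complete_bell (\<lambda>j. x ^ j * a j) l
          = x ^ Suc m * (of_nat (m choose l) * a (Suc m - l) * complete_bell a l)" .
    qed
    then show ?thesis
      by (simp add: Suc sum_distrib_left)
  qed simp
qed

lemma complete_bell_field_differentiable:
  fixes c :: "nat \<Rightarrow> 'a::real_normed_field \<Rightarrow> 'a"
  assumes "\<And>j. 0 < j \<Longrightarrow> c j field_differentiable at t"
  shows "(\<lambda>t. complete_bell (\<lambda>j. c j t) n) field_differentiable at t"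
proof (induction n rule: less_induct)
  case (less n)
  show ?case
  proof (cases n)
    case (Suc m)
    have "(\<lambda>t. \<Sum>l=0..m. of_nat (m choose l) * c (Suc m - l) t * complete_bell (\<lambda>j. c j t) l)
          field_differentiable at t"
      by (intro field_differentiable_sum field_differentiable_mult field_differentiable_const assms less)
         (auto simp: Suc Suc_diff_le)
    then show ?thesis
      by (simp add: Suc)
  qed simp
qed

text \<open>Faa di Bruno's formula for \<open>f = exp g\<close>, with \<open>c j\<close> standing for the \<open>j\<close>-th derivative of \<open>g\<close>.\<close>

lemma higher_deriv_eq_complete_bell:
  fixes f :: "'a::real_normed_field \<Rightarrow> 'a" and c :: "nat \<Rightarrow> 'a \<Rightarrow> 'a"
  assumes S: "open S" and t: "t \<in> S"
    and df: "\<And>t. t \<in> S \<Longrightarrow> (f has_field_derivative f t * c 1 t) (at t)"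
    and dc: "\<And>j t. 0 < j \<Longrightarrow> t \<in> S \<Longrightarrow> (c j has_field_derivative c (Suc j) t) (at t)"
  shows "(deriv ^^ n) f t = f t * complete_bell (\<lambda>j. c j t) n"
  using t
proof (induction n arbitrary: t rule: less_induct)
  case (less n)
  have fd_f: "f field_differentiable at t" if "t \<in> S" for t
    using df[OF that] field_differentiable_def by blast
  have fd_c: "c j field_differentiable at t" if "0 < j" "t \<in> S" for j t
    using dc[OF that] field_differentiable_def by blast
  have deriv_c1: "(deriv ^^ i) (c 1) t = c (Suc i) t" if "t \<in> S" for i t
    using higher_deriv_eq_derivative_sequence[of S t "\<lambda>i. c (Suc i)", OF S that dc] by simp
  show ?case
  proof (cases n)
    case 0
    then show ?thesis by simp
  next
    case (Suc m)
    have "eventually (\<lambda>x. deriv f x = f x * c 1 x) (nhds t)"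
      using eventually_nhds_in_open[OF S less.prems] by eventually_elim (use df DERIV_imp_deriv in blast)
    then have "(deriv ^^ n) f t = (deriv ^^ m) (\<lambda>x. f x * c 1 x) t"
      unfolding Suc funpow_Suc_right o_apply by (rule higher_deriv_cong_ev) simp
    also have "\<dots> = (\<Sum>i = 0..m. of_nat (m choose i) * (deriv ^^ i) f t * (deriv ^^ (m-i)) (c 1) t)"
    proof (rule higher_deriv_mult[OF S less.prems])
      fix i x assume i: "i < m" and x: "x \<in> S"
      have "(\<lambda>t. f t * complete_bell (\<lambda>j. c j t) i) field_differentiable at x"
        by (intro field_differentiable_mult fd_f[OF x] complete_bell_field_differentiable fd_c[OF _ x])
      then show "(deriv ^^ i) f field_differentiable at x"
        by (rule field_differentiable_transform_within_open[OF _ S x]) (use i Suc less.IH in simp)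
      show "(deriv ^^ i) (c 1) field_differentiable at x"
        by (rule field_differentiable_transform_within_open[OF fd_c[of "Suc i"] S x])
           (use x deriv_c1 in simp_all)
    qed
    also have "\<dots> = (\<Sum>i = 0..m. of_nat (m choose i) * (f t * complete_bell (\<lambda>j. c j t) i) * c (Suc m - i) t)"
    proof (intro sum.cong refl)
      fix i assume "i \<in> {0..m}"
      then have "(deriv ^^ i) f t = f t * complete_bell (\<lambda>j. c j t) i"
        and "(deriv ^^ (m-i)) (c 1) t = c (Suc m - i) t"
        using less Suc deriv_c1 by (simp_all add: Suc_diff_le)
      then show "of_nat (m choose i) * (deriv ^^ i) f t * (deriv ^^ (m-i)) (c 1) t
          = of_nat (m choose i) * (f t * complete_bell (\<lambda>j. c j t) i) * c (Suc m - i) t"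
        by simp
    qed
    also have "\<dots> = f t * complete_bell (\<lambda>j. c j t) n"
      by (simp add: Suc sum_distrib_left algebra_simps)
    finally show ?thesis .
  qed
qed

text \<open>Splitting off the first derivative: multiplying \<open>f\<close> by \<open>exp (- c 1 m * (t - m))\<close> removes
  \<open>c 1 m\<close> from the logarithmic derivative, and the Leibniz rule puts the factor back.\<close>

lemma higher_deriv_eq_binomial_complete_bell:
  fixes f :: "'a::{real_normed_field,banach} \<Rightarrow> 'a" and c :: "nat \<Rightarrow> 'a \<Rightarrow> 'a"
  assumes S: "open S" and m: "m \<in> S"
    and df: "\<And>t. t \<in> S \<Longrightarrow> (f has_field_derivative f t * c 1 t) (at t)"
    and dc: "\<And>j t. 0 < j \<Longrightarrow> t \<in> S \<Longrightarrow> (c j has_field_derivative c (Suc j) t) (at t)"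
  shows "(deriv ^^ p) f m = f m * (\<Sum>i=0..p. of_nat (p choose i) * c 1 m ^ (p-i)
                                     * complete_bell (\<lambda>j. if j = 1 then 0 else c j m) i)"
proof -
  define \<beta> where "\<beta> = c 1 m"
  define H where "H t = f t * exp (- \<beta> * (t - m))" for t
  define E where "E t = exp (\<beta> * (t - m))" for t
  define c' where "c' j t = c j t - (if j = 1 then \<beta> else 0)" for j t
  have dH: "(H has_field_derivative H t * c' 1 t) (at t)" if "t \<in> S" for t
  proof -
    have "((\<lambda>t. exp (- \<beta> * (t - m))) has_field_derivative exp (- \<beta> * (t - m)) * (- \<beta>)) (at t)"
      by (auto intro!: derivative_eq_intros)
    from DERIV_mult[OF df[OF that] this] show ?thesis
      unfolding H_def c'_def by (simp add: algebra_simps)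
  qed
  have dc': "(c' j has_field_derivative c' (Suc j) t) (at t)" if "0 < j" "t \<in> S" for j t
    using dc[OF that] that(1) unfolding c'_def by (auto intro!: derivative_eq_intros)
  have deriv_H: "(deriv ^^ i) H t = H t * complete_bell (\<lambda>j. c' j t) i" if "t \<in> S" for i t
    by (rule higher_deriv_eq_complete_bell[OF S that dH dc'])
  have deriv_E: "(deriv ^^ i) E = (\<lambda>t. \<beta> ^ i * E t)" for i
  proof (induction i)
    case (Suc i)
    have "((\<lambda>t. \<beta> ^ i * E t) has_field_derivative \<beta> ^ Suc i * E t) (at t)" for t
      unfolding E_def by (auto intro!: derivative_eq_intros)
    then show ?case
      using Suc by (auto intro!: ext DERIV_imp_deriv)
  qed simp
  have fd_H: "(deriv ^^ i) H field_differentiable at t" if "t \<in> S" for i t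
  proof -
    have "H field_differentiable at t" "\<And>j. 0 < j \<Longrightarrow> c' j field_differentiable at t"
      using dH dc' that field_differentiable_def by blast+
    then have "(\<lambda>t. H t * complete_bell (\<lambda>j. c' j t) i) field_differentiable at t"
      by (intro field_differentiable_mult complete_bell_field_differentiable)
    then show ?thesis
      by (rule field_differentiable_transform_within_open[OF _ S that]) (simp add: deriv_H)
  qed
  have fd_E: "(deriv ^^ i) E field_differentiable at t" for i t
    unfolding deriv_E E_def by (auto intro!: derivative_eq_intros simp: field_differentiable_def)
  have "f = (\<lambda>t. H t * E t)"
    by (auto simp: H_def E_def simp flip: exp_add)
  then have "(deriv ^^ p) f m = (\<Sum>i=0..p. of_nat (p choose i) * (deriv ^^ i) H m * (deriv ^^ (p-i)) E m)"
    using higher_deriv_mult[OF S m fd_H fd_E] by simp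
  also have "\<dots> = (\<Sum>i=0..p. of_nat (p choose i) * (f m * complete_bell (\<lambda>j. c' j m) i) * \<beta> ^ (p-i))"
    by (simp add: deriv_H[OF m] deriv_E H_def E_def)
  also have "(\<lambda>j. c' j m) = (\<lambda>j. if j = 1 then 0 else c j m)"
    by (auto simp: c'_def \<beta>_def)
  finally show ?thesis
    by (simp add: \<beta>_def sum_distrib_left algebra_simps)
qed

definition gbinom_domain :: "real \<Rightarrow> real set" where
  "gbinom_domain k = {t. 2*t+1 \<notin> \<int>\<^sub>\<le>\<^sub>0 \<and> t+1+k \<notin> \<int>\<^sub>\<le>\<^sub>0 \<and> t+1-k \<notin> \<int>\<^sub>\<le>\<^sub>0}"

lemma open_gbinom_domain: "open (gbinom_domain k)"
proof -
  have "open ((\<lambda>t::real. a*t+b) -` (- \<int>\<^sub>\<le>\<^sub>0))" for a b :: real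
    by (intro continuous_open_vimage open_Compl closed_nonpos_Ints) (auto intro!: continuous_intros)
  moreover have "gbinom_domain k = ((\<lambda>t. 2*t+1) -` (- \<int>\<^sub>\<le>\<^sub>0)) \<inter> ((\<lambda>t. 1*t+(1+k)) -` (- \<int>\<^sub>\<le>\<^sub>0))
                                  \<inter> ((\<lambda>t. 1*t+(1-k)) -` (- \<int>\<^sub>\<le>\<^sub>0))"
    by (auto simp: gbinom_domain_def algebra_simps)
  ultimately show ?thesis
    by (metis open_Int)
qed

text \<open>For \<open>j \<ge> 1\<close> this is the \<open>j\<close>-th derivative of \<open>ln \<bar>gbinom k t\<bar>\<close>.\<close>

definition gbinom_logderiv :: "real \<Rightarrow> nat \<Rightarrow> real \<Rightarrow> real" where
  "gbinom_logderiv k j t = 2^j * Polygamma (j-1) (2*t+1) - Polygamma (j-1) (t+1+k) - Polygamma (j-1) (t+1-k)"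

lemma Delta_eq_gbinom_logderiv: "Delta k j t = (-1)^j * gbinom_logderiv k j t"
  by (simp add: Delta_def gbinom_logderiv_def)

lemma has_field_derivative_gbinom_logderiv:
  assumes "0 < j" "t \<in> gbinom_domain k"
  shows "(gbinom_logderiv k j has_real_derivative gbinom_logderiv k (Suc j) t) (at t)"
proof -
  obtain i where j: "j = Suc i"
    using assms(1) gr0_implies_Suc by blast
  have "((\<lambda>t. 2^j * Polygamma i (2*t+1) - Polygamma i (t+1+k) - Polygamma i (t+1-k)) has_real_derivative
     2^j * (Polygamma (Suc i) (2*t+1) * 2) - Polygamma (Suc i) (t+1+k) - Polygamma (Suc i) (t+1-k)) (at t)"
    using assms(2) unfolding gbinom_domain_def by (auto intro!: derivative_eq_intros)
  then show ?thesis
    unfolding gbinom_logderiv_def j by (simp add: algebra_simps)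
qed

lemma has_field_derivative_gbinom:
  assumes "t \<in> gbinom_domain k"
  shows "(gbinom k has_real_derivative gbinom k t * gbinom_logderiv k 1 t) (at t)"
proof -
  have ne: "2*t+1 \<notin> \<int>\<^sub>\<le>\<^sub>0" "t+k+1 \<notin> \<int>\<^sub>\<le>\<^sub>0" "t-k+1 \<notin> \<int>\<^sub>\<le>\<^sub>0"
    using assms unfolding gbinom_domain_def by (auto simp: algebra_simps)
  then have "Gamma (2*t+1) \<noteq> 0" "Gamma (t+k+1) \<noteq> 0" "Gamma (t-k+1) \<noteq> 0"
    by (auto simp: Gamma_eq_zero_iff)
  then have "(Gamma (2*t+1) * Digamma (2*t+1) * 2 * (Gamma (t+k+1) * Gamma (t-k+1))
       - Gamma (2*t+1) * (Gamma (t+k+1) * Digamma (t+k+1) * Gamma (t-k+1)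
                          + Gamma (t-k+1) * Digamma (t-k+1) * Gamma (t+k+1)))
      / (Gamma (t+k+1) * Gamma (t-k+1) * (Gamma (t+k+1) * Gamma (t-k+1)))
      = gbinom k t * gbinom_logderiv k 1 t"
    unfolding gbinom_def gbinom_logderiv_def by (simp add: field_simps add_ac)
  moreover have "((\<lambda>t. Gamma (2*t+1) / (Gamma (t+k+1) * Gamma (t-k+1))) has_real_derivative
      (Gamma (2*t+1) * Digamma (2*t+1) * 2 * (Gamma (t+k+1) * Gamma (t-k+1))
       - Gamma (2*t+1) * (Gamma (t+k+1) * Digamma (t+k+1) * Gamma (t-k+1)
                          + Gamma (t-k+1) * Digamma (t-k+1) * Gamma (t+k+1)))
      / (Gamma (t+k+1) * Gamma (t-k+1) * (Gamma (t+k+1) * Gamma (t-k+1)))) (at t)"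
    using ne \<open>Gamma (t+k+1) \<noteq> 0\<close> \<open>Gamma (t-k+1) \<noteq> 0\<close>
    by (intro DERIV_divide DERIV_mult) (auto intro!: derivative_eq_intros)
  ultimately show ?thesis
    unfolding gbinom_def[abs_def] by simp
qed

lemma complete_bell_gbinom_logderiv_eq_xseq:
  "complete_bell (\<lambda>j. if j = 1 then 0 else gbinom_logderiv k j m) i = (-1)^i * xseq k i m"
proof -
  have "xseq k i m = complete_bell (\<lambda>j. if j = 1 then 0 else Delta k j m) i"
  proof (induction i rule: less_induct)
    case (less i)
    consider "i = 0" | "i = 1" | n where "i = Suc (Suc n)"
      by (metis One_nat_def not0_implies_Suc)
    then show ?case
    proof cases
      case 3
      have "xseq k i m = (\<Sum>l=0..n. real (Suc n choose l) * Delta k (Suc (Suc n) - l) m * xseq k l m)"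
        unfolding 3 by (subst xseq.simps) simp
      also have "\<dots> = (\<Sum>l=0..Suc n. real (Suc n choose l)
                         * (if Suc (Suc n) - l = 1 then 0 else Delta k (Suc (Suc n) - l) m)
                         * complete_bell (\<lambda>j. if j = 1 then 0 else Delta k j m) l)"
        using 3 less by (simp add: Suc_diff_le)
      finally show ?thesis
        unfolding 3 by simp
    qed (simp_all add: xseq.simps)
  qed
  moreover have "(\<lambda>j. if j = 1 then 0 else Delta k j m)
      = (\<lambda>j. (-1)^j * (if j = 1 then 0 else gbinom_logderiv k j m))"
    by (auto simp: Delta_eq_gbinom_logderiv)
  ultimately show ?thesis
    by (simp add: complete_bell_scale)
qed

lemma higher_deriv_gbinom_mult_exp:
  assumes m: "m \<in> gbinom_domain k"
  shows "(deriv ^^ p) (\<lambda>t. gbinom k t * exp (\<gamma> * t)) m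
    = (-1)^p * (gbinom k m * exp (\<gamma> * m))
        * (\<Sum>i=0..p. real (p choose i) * (Delta k 1 m - \<gamma>)^(p-i) * xseq k i m)"
proof -
  define c where "c = (\<lambda>j t. gbinom_logderiv k j t + (if j = 1 then \<gamma> else 0))"
  have df: "((\<lambda>t. gbinom k t * exp (\<gamma> * t)) has_real_derivative (gbinom k t * exp (\<gamma> * t)) * c 1 t) (at t)"
    if "t \<in> gbinom_domain k" for t
    using has_field_derivative_gbinom[OF that]
    by (auto intro!: derivative_eq_intros simp: c_def algebra_simps)
  have dc: "(c j has_real_derivative c (Suc j) t) (at t)" if "0 < j" "t \<in> gbinom_domain k" for j t
    using has_field_derivative_gbinom_logderiv[OF that] that(1)
    by (auto intro!: derivative_eq_intros simp: c_def)
  define d where "d = Delta k 1 m - \<gamma>"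
  have c1: "c 1 m = - d"
    by (simp add: c_def d_def Delta_eq_gbinom_logderiv)
  have bell: "complete_bell (\<lambda>j. if j = 1 then 0 else c j m) i = (-1)^i * xseq k i m" for i
    using complete_bell_gbinom_logderiv_eq_xseq[of k m i] by (simp add: c_def cong: if_cong)
  have "(deriv ^^ p) (\<lambda>t. gbinom k t * exp (\<gamma> * t)) m
      = gbinom k m * exp (\<gamma> * m) * (\<Sum>i=0..p. real (p choose i) * (- d)^(p-i) * ((-1)^i * xseq k i m))"
    using higher_deriv_eq_binomial_complete_bell[OF open_gbinom_domain m df dc, of p] unfolding c1 bell by simp
  also have "\<dots> = gbinom k m * exp (\<gamma> * m) * (\<Sum>i=0..p. (-1)^p * (real (p choose i) * d^(p-i) * xseq k i m))"
  proof (intro arg_cong[where f = "(*) _"] sum.cong refl)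
    fix i assume "i \<in> {0..p}"
    then have "(-1::real)^(p-i) * (-1)^i = (-1)^p"
      by (simp flip: power_add)
    then show "real (p choose i) * (- d)^(p-i) * ((-1)^i * xseq k i m)
        = (-1)^p * (real (p choose i) * d^(p-i) * xseq k i m)"
      by (simp add: power_minus[of d] mult_ac)
  qed
  finally show ?thesis
    by (simp add: d_def sum_distrib_left mult_ac)
qed

theorem theorem3:
  fixes k m :: real and p :: nat
  assumes "2*m+1 \<notin> \<int>\<^sub>\<le>\<^sub>0" and "m+1+k \<notin> \<int>\<^sub>\<le>\<^sub>0" and "m+1-k \<notin> \<int>\<^sub>\<le>\<^sub>0"
  shows "(deriv ^^ p) (\<lambda>t. gbinom k t) m
           = (-1)^p * gbinom k m * (\<Sum>i=0..p. real (p choose i) * Delta k 1 m ^ (p-i) * xseq k i m)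
       \<and> (deriv ^^ p) (\<lambda>t. gbinom k t / 4 powr t) m
           = (-1)^p * (gbinom k m / 4 powr m)
               * (\<Sum>i=0..p. real (p choose i) * (Delta k 1 m + ln 4) ^ (p-i) * xseq k i m)"
proof
  have m: "m \<in> gbinom_domain k"
    using assms by (simp add: gbinom_domain_def)
  show "(deriv ^^ p) (\<lambda>t. gbinom k t) m
      = (-1)^p * gbinom k m * (\<Sum>i=0..p. real (p choose i) * Delta k 1 m ^ (p-i) * xseq k i m)"
    using higher_deriv_gbinom_mult_exp[OF m, of p 0] by simp
  have "gbinom k t / 4 powr t = gbinom k t * exp (- ln 4 * t)" for t
    by (simp add: powr_def exp_minus divide_inverse)
  then show "(deriv ^^ p) (\<lambda>t. gbinom k t / 4 powr t) m
      = (-1)^p * (gbinom k m / 4 powr m)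
          * (\<Sum>i=0..p. real (p choose i) * (Delta k 1 m + ln 4) ^ (p-i) * xseq k i m)"
    using higher_deriv_gbinom_mult_exp[OF m, of p "- ln 4"] by simp
qed

end
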